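(* Let $\xi_1,\dots,\xi_n$ be independent random variables taking values in $\mathbb{Z}_+=\{0,1,2,\dots\}$, where for each $i$ the probability generating function $\psi_{\xi_i}$ satisfies $$\frac{\psi'_{\xi_i}(w)}{\psi_{\xi_i}(w)}=\sum_{j=0}^{\infty} g_{i,j+1}w^j$$ for real coefficients $g_{i,j+1}$, the series converging absolutely. Let $W_n=\sum_{i=1}^n\xi_i$ and $\mu=\sum_{i=1}^n\sum_{j=0}^\infty g_{i,j+1}$. Then a Stein operator for $W_n$ is $$\mathscr{A}_{W_n}h(j)=\mu\, h(j+1)-j\,h(j)+\sum_{i=1}^{n}\sum_{k=0}^{\infty}\sum_{l=1}^{k}g_{i,k+1}\,\Delta h(j+l),\qquad j\in\mathbb{Z}_+,$$ that is, $\mathbb{E}[\mathscr{A}_{W_n}h(W_n)]=0$ for all $h\in H_{W_n}$.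
   Context: $\Delta h(j)=h(j+1)-h(j)$ is the forward difference. $H$ denotes the set of bounded functions $h:\mathbb{Z}_+\to\mathbb{R}$, and for a random variable $\bar X$, $H_{\bar X}=\{h\in H: h(0)=0 \text{ and } h(j)=0 \text{ for } j\notin \mathrm{Supp}(\bar X)\}$. A Stein operator for $\bar X$ is an operator $\mathscr{A}_{\bar X}$ on such functions with $\mathbb{E}[\mathscr{A}_{\bar X}h(\bar X)]=0$ for the relevant class of $h$. $\mu$ equals the mean of $W_n$. *)

theory Defs
  imports "HOL-Probability.Probability"
begin

definition pgf :: "'a measure \<Rightarrow> ('a \<Rightarrow> nat) \<Rightarrow> real \<Rightarrow> real" where
  "pgf M X w = (\<integral>\<omega>. w ^ X \<omega> \<partial>M)"

definition supp_rv :: "'a measure \<Rightarrow> ('a \<Rightarrow> nat) \<Rightarrow> nat set" where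
  "supp_rv M X = {j. measure M {\<omega> \<in> space M. X \<omega> = j} > 0}"

definition fdiff :: "(nat \<Rightarrow> real) \<Rightarrow> nat \<Rightarrow> real" where
  "fdiff h j = h (j + 1) - h j"

definition H_class :: "'a measure \<Rightarrow> ('a \<Rightarrow> nat) \<Rightarrow> (nat \<Rightarrow> real) set" where
  "H_class M X = {h. bounded (range h) \<and> h 0 = 0 \<and> (\<forall>j. j \<notin> supp_rv M X \<longrightarrow> h j = 0)}"

definition stein_op :: "real \<Rightarrow> nat \<Rightarrow> (nat \<Rightarrow> nat \<Rightarrow> real) \<Rightarrow> (nat \<Rightarrow> real) \<Rightarrow> nat \<Rightarrow> real" where
  "stein_op \<mu> n g h j =
     \<mu> * h (j + 1) - real j * h j
     + (\<Sum>i=1..n. \<Sum>k. \<Sum>l=1..k. g i (k + 1) * fdiff h (j + l))"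

end

theory Submission
  imports Defs "HOL-Analysis.FPS_Convergence"
begin

text \<open>
  Write P_X for the power series with coefficients P(X = k). The hypothesis on the pgf of xi_i says
  P_i' = G_i P_i with G_i = sum_j g(i, j + 1) z^j, and by independence P_W is the product of the P_i,
  so P_W' = C P_W with C = sum_i G_i. On the coefficients q(m) = P(W = m) this is the recurrence
  (N + 1) q(N + 1) = sum_{m <= N} q(m) c(N - m). The inner sums of the Stein operator telescope, so it
  equals sum_k c(k) h(j + k + 1) - j h(j). Summing sum_m q(m) sum_k c(k) h(m + k + 1) along the
  diagonals m + k = N and applying the recurrence gives sum_N (N + 1) q(N + 1) h(N + 1) = E[W h(W)].
\<close>

section \<open>Power series\<close>

lemma eventually_norm_less_fps_conv_radius:
  fixes F :: "'a::{banach, real_normed_div_algebra} fps"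
  assumes "0 < fps_conv_radius F"
  shows "eventually (\<lambda>z. ereal (norm z) < fps_conv_radius F) (at 0)"
proof -
  have "eventually (\<lambda>z. z \<in> eball 0 (fps_conv_radius F)) (nhds 0)"
    using assms by (intro eventually_nhds_in_open) (auto simp: zero_ereal_def)
  then show ?thesis
    unfolding eventually_at_filter by (auto elim: eventually_mono)
qed

lemma eventually_eval_fps_nonzero:
  fixes F :: "'a::{banach, real_normed_field} fps"
  assumes "F \<noteq> 0" and "0 < fps_conv_radius F"
  shows "eventually (\<lambda>z. eval_fps F z \<noteq> 0) (at 0)"
proof -
  define m where "m = subdegree F"
  define Q where "Q = fps_shift m F"
  have "isCont (eval_fps Q) 0"
    using assms by (intro continuous_eval_fps) (simp add: Q_def zero_ereal_def)
  moreover have "eval_fps Q 0 \<noteq> 0"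
    using assms by (simp add: Q_def m_def eval_fps_at_0)
  ultimately have "eventually (\<lambda>z. eval_fps Q z \<noteq> 0) (at 0)"
    unfolding isCont_def by (rule tendsto_imp_eventually_ne)
  moreover have "eventually (\<lambda>z. z \<noteq> 0) (at (0::'a))"
    by (simp add: eventually_at_filter)
  ultimately show ?thesis using eventually_norm_less_fps_conv_radius[OF assms(2)]
  proof eventually_elim
    case (elim z)
    then have "eval_fps Q z = eval_fps F z / z ^ m"
      unfolding Q_def by (subst eval_fps_shift) (auto simp: m_def)
    with elim show "eval_fps F z \<noteq> 0" by auto
  qed
qed

lemma eval_fps_eqD_at_0:
  fixes F G :: "'a::{banach, real_normed_field} fps"
  assumes "0 < fps_conv_radius F" and "0 < fps_conv_radius G"
    and "eventually (\<lambda>z. eval_fps F z = eval_fps G z) (at 0)"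
  shows "F = G"
proof (rule ccontr)
  assume "F \<noteq> G"
  moreover have "0 < fps_conv_radius (F - G)"
    using fps_conv_radius_diff[of F G] assms(1,2) by (auto simp: min_def split: if_splits)
  ultimately have "eventually (\<lambda>z. eval_fps (F - G) z \<noteq> 0) (at 0)"
    by (intro eventually_eval_fps_nonzero) auto
  with assms(3) eventually_norm_less_fps_conv_radius[OF assms(1)]
    eventually_norm_less_fps_conv_radius[OF assms(2)]
  have "eventually (\<lambda>z. False) (at (0::'a))"
    by eventually_elim (simp add: eval_fps_diff)
  then show False by simp
qed

text \<open>Only a punctured neighbourhood of 0 is available: \<open>eval_fps P 0\<close> may vanish.\<close>
lemma fps_deriv_eq_mult_if_log_deriv:
  fixes P G :: "'a::{banach, real_normed_field} fps"
  assumes "P \<noteq> 0" and "0 < fps_conv_radius P" and "0 < fps_conv_radius G"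
    and "eventually (\<lambda>z. deriv (eval_fps P) z / eval_fps P z = eval_fps G z) (at 0)"
  shows "fps_deriv P = G * P"
proof (rule eval_fps_eqD_at_0)
  show "0 < fps_conv_radius (fps_deriv P)"
    using assms(2) fps_conv_radius_deriv[of P] by (rule less_le_trans)
  show "0 < fps_conv_radius (G * P)"
    using assms(2,3) fps_conv_radius_mult[of G P] by (auto simp: min_def split: if_splits)
  show "eventually (\<lambda>z. eval_fps (fps_deriv P) z = eval_fps (G * P) z) (at 0)"
    using assms(4) eventually_eval_fps_nonzero[OF assms(1,2)]
      eventually_norm_less_fps_conv_radius[OF assms(2)]
      eventually_norm_less_fps_conv_radius[OF assms(3)]
    by eventually_elim (simp add: eval_fps_deriv eval_fps_mult field_simps)
qed

lemma fps_deriv_prod: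
  fixes P G :: "'i \<Rightarrow> 'a::comm_ring_1 fps"
  assumes "\<And>i. i \<in> I \<Longrightarrow> fps_deriv (P i) = G i * P i"
  shows "fps_deriv (\<Prod>i\<in>I. P i) = (\<Sum>i\<in>I. G i) * (\<Prod>i\<in>I. P i)"
  using assms by (induction I rule: infinite_finite_induct) (simp_all add: algebra_simps)

lemma fps_nth_Suc_if_fps_deriv_eq_mult:
  fixes F C :: "'a::comm_ring_1 fps"
  assumes "fps_deriv F = C * F"
  shows "of_nat (Suc N) * fps_nth F (Suc N) = (\<Sum>m\<le>N. fps_nth F m * fps_nth C (N - m))"
proof -
  have "fps_nth (fps_deriv F) N = fps_nth (F * C) N"
    by (simp add: assms mult.commute)
  then show ?thesis
    unfolding fps_deriv_nth fps_mult_nth atLeast0AtMost by simp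
qed

lemma one_le_fps_conv_radius_if_abs_summable:
  fixes c :: "nat \<Rightarrow> real"
  assumes "summable (\<lambda>k. \<bar>c k\<bar>)"
  shows "1 \<le> fps_conv_radius (Abs_fps c)"
proof -
  have "norm (1::real) \<le> conv_radius c"
    using assms by (intro conv_radius_geI) (simp add: summable_rabs_cancel)
  then show ?thesis
    by (simp add: fps_conv_radius_def one_ereal_def)
qed

section \<open>Series\<close>

lemma suminf_suminf_eq_suminf_diagonal:
  fixes a :: "nat \<Rightarrow> nat \<Rightarrow> real" and \<alpha> \<beta> :: "nat \<Rightarrow> real"
  assumes "summable \<alpha>" "summable \<beta>" "\<And>k. 0 \<le> \<alpha> k" "\<And>m. 0 \<le> \<beta> m"
    and bound: "\<And>k m. \<bar>a k m\<bar> \<le> \<alpha> k * \<beta> m"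
  shows "(\<Sum>k. \<Sum>m. a k m) = (\<Sum>N. \<Sum>k\<le>N. a k (N - k))"
proof -
  have "(\<lambda>(k, m). \<alpha> k * \<beta> m) summable_on UNIV \<times> UNIV"
  proof (rule summable_on_SigmaI)
    have "(\<beta> has_sum suminf \<beta>) UNIV"
      using assms(2,4) by (intro norm_summable_imp_has_sum summable_sums) simp_all
    then show "((\<lambda>m. case (k, m) of (k, m) \<Rightarrow> \<alpha> k * \<beta> m) has_sum \<alpha> k * suminf \<beta>) UNIV" for k
      by (simp add: has_sum_cmult_right)
    show "(\<lambda>k. \<alpha> k * suminf \<beta>) summable_on UNIV"
      using assms by (simp add: summable_on_UNIV_nonneg_real_iff suminf_nonneg summable_mult2)
  qed (use assms in simp)
  then have "(\<lambda>x. norm ((\<lambda>(k, m). a k m) x)) summable_on UNIV \<times> UNIV"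
    by (rule Infinite_Sum.abs_summable_on_comparison_test') (auto simp: bound)
  then obtain T where T: "((\<lambda>(k, m). a k m) has_sum T) (UNIV \<times> UNIV)"
    using abs_summable_summable summable_on_def by blast
  have row: "((\<lambda>m. a k m) has_sum (\<Sum>m. a k m)) UNIV" for k
  proof -
    have abs_summable: "summable (\<lambda>m. norm (a k m))"
      using bound by (intro summable_comparison_test'[OF summable_mult[OF assms(2), of "\<alpha> k"]]) simp
    show ?thesis
      by (rule norm_summable_imp_has_sum[OF abs_summable summable_sums[OF summable_norm_cancel[OF abs_summable]]])
  qed
  have "(\<lambda>k. \<Sum>m. a k m) sums T"
    by (rule has_sum_imp_sums[OF has_sum_Sigma'[OF T]]) (simp add: row)
  moreover have diagonal: "((\<lambda>(N, k). a k (N - k)) has_sum T) (SIGMA N:UNIV. {..N})"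
    using T by (subst has_sum_reindex_bij_witness[where i = "\<lambda>(k, m). (k + m, k)"
        and j = "\<lambda>(N, k). (k, N - k)" and T = "UNIV \<times> UNIV"]) auto
  moreover have "(\<lambda>N. \<Sum>k\<le>N. a k (N - k)) sums T"
    by (rule has_sum_imp_sums[OF has_sum_Sigma'[OF diagonal]]) (simp add: has_sum_finite)
  ultimately show ?thesis
    by (simp add: sums_iff)
qed

lemma
  fixes c f :: "nat \<Rightarrow> real"
  assumes c: "summable (\<lambda>k. \<bar>c k\<bar>)" and f: "\<And>k. \<bar>f k\<bar> \<le> B"
  shows summable_mult_bounded: "summable (\<lambda>k. c k * f k)"
    and abs_suminf_mult_bounded_le: "\<bar>\<Sum>k. c k * f k\<bar> \<le> B * (\<Sum>k. \<bar>c k\<bar>)"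
proof -
  have le: "\<bar>c k * f k\<bar> \<le> B * \<bar>c k\<bar>" for k
    using mult_left_mono[OF f[of k] abs_ge_zero[of "c k"]] by (simp add: abs_mult mult.commute)
  have abs_summable: "summable (\<lambda>k. \<bar>c k * f k\<bar>)"
    using le by (intro summable_comparison_test'[OF summable_mult[OF c, of B]]) auto
  then show "summable (\<lambda>k. c k * f k)"
    by (rule summable_rabs_cancel)
  have "\<bar>\<Sum>k. c k * f k\<bar> \<le> (\<Sum>k. \<bar>c k * f k\<bar>)"
    by (rule summable_rabs[OF abs_summable])
  also have "\<dots> \<le> (\<Sum>k. B * \<bar>c k\<bar>)"
    using le abs_summable c by (intro suminf_le summable_mult) auto
  also have "\<dots> = B * (\<Sum>k. \<bar>c k\<bar>)"
    by (rule suminf_mult[OF c])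
  finally show "\<bar>\<Sum>k. c k * f k\<bar> \<le> B * (\<Sum>k. \<bar>c k\<bar>)" .
qed

lemma summable_abs_sum:
  fixes c :: "'i \<Rightarrow> nat \<Rightarrow> real"
  assumes "\<And>i. i \<in> I \<Longrightarrow> summable (\<lambda>k. \<bar>c i k\<bar>)"
  shows "summable (\<lambda>k. \<bar>\<Sum>i\<in>I. c i k\<bar>)"
proof (rule summable_comparison_test')
  show "summable (\<lambda>k. \<Sum>i\<in>I. \<bar>c i k\<bar>)"
    using assms by (rule summable_sum)
  show "norm \<bar>\<Sum>i\<in>I. c i k\<bar> \<le> (\<Sum>i\<in>I. \<bar>c i k\<bar>)" for k
    by (simp add: sum_abs)
qed

text \<open>The recurrence is the coefficientwise form of \<open>P' = C P\<close> for the power series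
  \<open>P = \<Sum>q\<^sub>m z\<^sup>m\<close> and \<open>C = \<Sum>c\<^sub>k z\<^sup>k\<close>.\<close>
locale size_bias_recurrence =
  fixes q c :: "nat \<Rightarrow> real"
  assumes q_nonneg: "\<And>m. 0 \<le> q m"
    and q_summable: "summable q"
    and c_abs_summable: "summable (\<lambda>k. \<bar>c k\<bar>)"
    and recurrence: "\<And>N. real (Suc N) * q (Suc N) = (\<Sum>m\<le>N. q m * c (N - m))"
begin

lemma summable_mult_index: "summable (\<lambda>m. real m * q m)"
proof -
  have "summable (\<lambda>N. \<Sum>m\<le>N. q m * c (N - m))"
    using q_nonneg q_summable c_abs_summable by (intro summable_Cauchy_product) simp_all
  then have "summable (\<lambda>N. real (Suc N) * q (Suc N))"
    by (simp only: recurrence)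
  then show ?thesis
    by (subst summable_Suc_iff[symmetric]) simp
qed

lemma summable_mult_index_bounded:
  assumes "\<And>j. \<bar>h j\<bar> \<le> B"
  shows "summable (\<lambda>m. real m * h m * q m)"
proof (rule summable_comparison_test'[OF summable_mult[OF summable_mult_index, of B]])
  fix m
  have "\<bar>h m\<bar> * (real m * q m) \<le> B * (real m * q m)"
    using assms q_nonneg by (intro mult_right_mono) auto
  then show "norm (real m * h m * q m) \<le> B * (real m * q m)"
    using q_nonneg by (simp add: abs_mult algebra_simps)
qed

lemma suminf_shifted_eq_suminf_size_biased:
  assumes h: "\<And>j. \<bar>h j\<bar> \<le> B"
  shows "(\<Sum>m. (\<Sum>k. c k * h (m + k + 1)) * q m) = (\<Sum>m. real m * h m * q m)"
proof -
  have "0 \<le> B"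
    using h[of 0] by simp
  have "(\<Sum>m. (\<Sum>k. c k * h (m + k + 1)) * q m) = (\<Sum>m. \<Sum>k. q m * (c k * h (m + k + 1)))"
    using suminf_mult[OF summable_mult_bounded[OF c_abs_summable h]]
    by (simp add: mult.commute)
  also have "\<dots> = (\<Sum>N. \<Sum>m\<le>N. q m * (c (N - m) * h (m + (N - m) + 1)))"
  proof (rule suminf_suminf_eq_suminf_diagonal[where \<alpha> = "\<lambda>m. B * q m" and \<beta> = "\<lambda>k. \<bar>c k\<bar>"])
    fix m k
    have "q m * (\<bar>c k\<bar> * \<bar>h (m + k + 1)\<bar>) \<le> q m * (\<bar>c k\<bar> * B)"
      using h q_nonneg by (intro mult_left_mono) auto
    then show "\<bar>q m * (c k * h (m + k + 1))\<bar> \<le> B * q m * \<bar>c k\<bar>"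
      using q_nonneg[of m] by (simp add: abs_mult algebra_simps)
  qed (use \<open>0 \<le> B\<close> q_nonneg q_summable c_abs_summable in \<open>auto intro: summable_mult\<close>)
  also have "\<dots> = (\<Sum>N. real (Suc N) * h (Suc N) * q (Suc N))"
  proof (rule suminf_cong)
    fix N
    have "(\<Sum>m\<le>N. q m * (c (N - m) * h (m + (N - m) + 1))) = (\<Sum>m\<le>N. q m * c (N - m)) * h (Suc N)"
      by (simp add: sum_distrib_right mult.assoc)
    then show "(\<Sum>m\<le>N. q m * (c (N - m) * h (m + (N - m) + 1))) = real (Suc N) * h (Suc N) * q (Suc N)"
      by (simp only: recurrence[symmetric]) (simp add: algebra_simps)
  qed
  also have "\<dots> = (\<Sum>m. real m * h m * q m)"
    using suminf_split_head[OF summable_mult_index_bounded[OF h]] by simp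
  finally show ?thesis .
qed

lemma
  assumes h: "\<And>j. \<bar>h j\<bar> \<le> B"
  shows summable_stein_identity:
      "summable (\<lambda>m. \<bar>(\<Sum>k. c k * h (m + k + 1)) - real m * h m\<bar> * q m)"
    and suminf_stein_identity:
      "(\<Sum>m. ((\<Sum>k. c k * h (m + k + 1)) - real m * h m) * q m) = 0"
proof -
  let ?S = "\<lambda>m. \<Sum>k. c k * h (m + k + 1)"
  let ?C = "\<Sum>k. \<bar>c k\<bar>"
  have S_bound: "\<bar>?S m\<bar> \<le> B * ?C" for m
    using abs_suminf_mult_bounded_le[OF c_abs_summable h] .
  have summable_S: "summable (\<lambda>m. ?S m * q m)"
  proof (rule summable_comparison_test'[OF summable_mult[OF q_summable, of "B * ?C"]])
    fix m
    show "norm (?S m * q m) \<le> B * ?C * q m"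
      using S_bound[of m] q_nonneg[of m] by (simp add: abs_mult mult_right_mono)
  qed
  show "summable (\<lambda>m. \<bar>?S m - real m * h m\<bar> * q m)"
  proof (rule summable_comparison_test'[OF summable_add[OF summable_mult[OF q_summable, of "B * ?C"]
        summable_mult[OF summable_mult_index, of B]]])
    fix m
    have "\<bar>?S m - real m * h m\<bar> \<le> \<bar>?S m\<bar> + real m * \<bar>h m\<bar>"
      using abs_triangle_ineq4[of "?S m" "real m * h m"] by (simp add: abs_mult)
    also have "\<dots> \<le> B * ?C + real m * B"
      using S_bound h by (intro add_mono mult_left_mono) auto
    finally have "\<bar>?S m - real m * h m\<bar> * q m \<le> (B * ?C + real m * B) * q m"
      using q_nonneg by (rule mult_right_mono)
    then show "norm (\<bar>?S m - real m * h m\<bar> * q m) \<le> B * ?C * q m + B * (real m * q m)"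
      using q_nonneg[of m] by (simp add: abs_mult algebra_simps)
  qed
  have "(\<Sum>m. (?S m - real m * h m) * q m) = (\<Sum>m. ?S m * q m - real m * h m * q m)"
    by (simp add: algebra_simps)
  also have "\<dots> = (\<Sum>m. ?S m * q m) - (\<Sum>m. real m * h m * q m)"
    by (rule suminf_diff[symmetric, OF summable_S summable_mult_index_bounded[OF h]])
  also have "\<dots> = 0"
    by (subst suminf_shifted_eq_suminf_size_biased[OF h]) (rule diff_self)
  finally show "(\<Sum>m. (?S m - real m * h m) * q m) = 0" .
qed

end

section \<open>Probability generating functions of \<open>\<nat>\<close>-valued random variables\<close>

lemma (in finite_measure)
  fixes X :: "'a \<Rightarrow> nat" and f :: "nat \<Rightarrow> real"
  assumes X: "X \<in> M \<rightarrow>\<^sub>M count_space UNIV"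
    and summable: "summable (\<lambda>k. \<bar>f k\<bar> * measure M {\<omega> \<in> space M. X \<omega> = k})"
  shows integrable_nat_valued_comp: "integrable M (\<lambda>\<omega>. f (X \<omega>))"
    and integral_nat_valued_comp:
      "(\<integral>\<omega>. f (X \<omega>) \<partial>M) = (\<Sum>k. f k * measure M {\<omega> \<in> space M. X \<omega> = k})"
proof -
  define A where "A k = {\<omega> \<in> space M. X \<omega> = k}" for k
  have A_sets: "A k \<in> sets M" for k
    unfolding A_def using X by measurable
  define F where "F k \<omega> = f k * indicator (A k) \<omega>" for k \<omega>
  have F_integrable: "integrable M (F k)" for k
    unfolding F_def using A_sets
    by (intro integrable_mult_right integrable_real_indicator) (simp_all add: less_top[symmetric])
  have F_sums: "(\<lambda>k. F k \<omega>) sums f (X \<omega>)" if "\<omega> \<in> space M" for \<omega>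
  proof -
    have "(\<lambda>k. F k \<omega>) = (\<lambda>k. if k = X \<omega> then f k else 0)"
      using that by (auto simp: F_def A_def)
    then show ?thesis using sums_single[of "X \<omega>" f] by simp
  qed
  have F_abs_summable: "AE \<omega> in M. summable (\<lambda>k. norm (F k \<omega>))"
  proof (rule AE_I2)
    fix \<omega> assume "\<omega> \<in> space M"
    then show "summable (\<lambda>k. norm (F k \<omega>))"
      by (intro summable_finite[of "{X \<omega>}"]) (auto simp: F_def A_def)
  qed
  have F_integral_summable: "summable (\<lambda>k. \<integral>\<omega>. norm (F k \<omega>) \<partial>M)"
    using summable A_sets by (simp add: F_def abs_mult A_def)
  have f_eq: "f (X \<omega>) = (\<Sum>k. F k \<omega>)" if "\<omega> \<in> space M" for \<omega>
    using F_sums[OF that] by (simp add: sums_iff)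
  show "integrable M (\<lambda>\<omega>. f (X \<omega>))"
    using integrable_suminf[OF F_integrable F_abs_summable F_integral_summable]
    by (rule Bochner_Integration.integrable_cong[THEN iffD1, rotated 2]) (simp_all add: f_eq)
  have "(\<integral>\<omega>. f (X \<omega>) \<partial>M) = (\<integral>\<omega>. (\<Sum>k. F k \<omega>) \<partial>M)"
    by (rule Bochner_Integration.integral_cong) (simp_all add: f_eq)
  also have "\<dots> = (\<Sum>k. \<integral>\<omega>. F k \<omega> \<partial>M)"
    by (rule integral_suminf[OF F_integrable F_abs_summable F_integral_summable])
  finally show "(\<integral>\<omega>. f (X \<omega>) \<partial>M) = (\<Sum>k. f k * measure M {\<omega> \<in> space M. X \<omega> = k})"
    using A_sets by (simp add: F_def A_def)
qed

definition pgf_fps :: "'a measure \<Rightarrow> ('a \<Rightarrow> nat) \<Rightarrow> real fps" where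
  "pgf_fps M X = Abs_fps (\<lambda>k. measure M {\<omega> \<in> space M. X \<omega> = k})"

context prob_space
begin

lemma sums_prob_nat_valued:
  assumes "X \<in> M \<rightarrow>\<^sub>M count_space UNIV"
  shows "(\<lambda>k. prob {\<omega> \<in> space M. X \<omega> = k}) sums 1"
proof -
  have "(\<lambda>k. prob {\<omega> \<in> space M. X \<omega> = k}) sums prob (\<Union>k. {\<omega> \<in> space M. X \<omega> = k})"
    using assms by (intro finite_measure_UNION) (auto simp: disjoint_family_on_def)
  moreover have "(\<Union>k. {\<omega> \<in> space M. X \<omega> = k}) = space M"
    by auto
  ultimately show ?thesis
    by (simp add: prob_space)
qed

lemma fps_conv_radius_pgf_fps:
  assumes "X \<in> M \<rightarrow>\<^sub>M count_space UNIV"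
  shows "1 \<le> fps_conv_radius (pgf_fps M X)"
  unfolding pgf_fps_def using sums_prob_nat_valued[OF assms]
  by (intro one_le_fps_conv_radius_if_abs_summable) (simp add: sums_iff)

lemma pgf_fps_nonzero:
  assumes "X \<in> M \<rightarrow>\<^sub>M count_space UNIV"
  shows "pgf_fps M X \<noteq> 0"
proof
  assume "pgf_fps M X = 0"
  then have "(\<lambda>k. prob {\<omega> \<in> space M. X \<omega> = k}) = (\<lambda>_. 0)"
    by (auto simp: pgf_fps_def fps_eq_iff)
  with sums_prob_nat_valued[OF assms] show False
    by (simp add: sums_iff)
qed

lemma
  assumes X: "X \<in> M \<rightarrow>\<^sub>M count_space UNIV" and w: "\<bar>w\<bar> \<le> 1"
  shows integrable_power_nat_valued: "integrable M (\<lambda>\<omega>. w ^ X \<omega>)"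
    and pgf_eq_eval_fps: "pgf M X w = eval_fps (pgf_fps M X) w"
proof -
  have summable: "summable (\<lambda>k. \<bar>w ^ k\<bar> * prob {\<omega> \<in> space M. X \<omega> = k})"
  proof (rule summable_comparison_test'[OF sums_summable[OF sums_prob_nat_valued[OF X]]])
    fix k
    show "norm (\<bar>w ^ k\<bar> * prob {\<omega> \<in> space M. X \<omega> = k}) \<le> prob {\<omega> \<in> space M. X \<omega> = k}"
      using w by (simp add: abs_mult power_abs mult_left_le_one_le power_le_one)
  qed
  show "integrable M (\<lambda>\<omega>. w ^ X \<omega>)"
    by (rule integrable_nat_valued_comp[OF X summable])
  show "pgf M X w = eval_fps (pgf_fps M X) w"
    unfolding pgf_def integral_nat_valued_comp[OF X summable]
    by (simp add: eval_fps_def pgf_fps_def mult.commute)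
qed

lemma pgf_sum_indep:
  assumes "finite I" and indep: "indep_vars (\<lambda>_. count_space UNIV) \<xi> I" and "\<bar>w\<bar> \<le> 1"
  shows "pgf M (\<lambda>\<omega>. \<Sum>i\<in>I. \<xi> i \<omega>) w = (\<Prod>i\<in>I. pgf M (\<xi> i) w)"
proof -
  have "indep_vars (\<lambda>_. borel) (\<lambda>i \<omega>. w ^ \<xi> i \<omega>) I"
    using indep by (rule indep_vars_compose2[where Y = "\<lambda>i k. w ^ k"]) simp
  moreover have "integrable M (\<lambda>\<omega>. w ^ \<xi> i \<omega>)" if "i \<in> I" for i
    using indep that assms(3) by (intro integrable_power_nat_valued) (auto simp: indep_vars_def)
  ultimately show ?thesis
    unfolding pgf_def power_sum using assms(1) by (intro indep_vars_lebesgue_integral)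
qed

lemma pgf_fps_sum_indep:
  assumes "finite I" and indep: "indep_vars (\<lambda>_. count_space UNIV) \<xi> I"
  shows "pgf_fps M (\<lambda>\<omega>. \<Sum>i\<in>I. \<xi> i \<omega>) = (\<Prod>i\<in>I. pgf_fps M (\<xi> i))"
proof (rule eval_fps_eqD_at_0)
  have rv: "\<xi> i \<in> M \<rightarrow>\<^sub>M count_space UNIV" if "i \<in> I" for i
    using indep that by (auto simp: indep_vars_def)
  then have sum_rv: "(\<lambda>\<omega>. \<Sum>i\<in>I. \<xi> i \<omega>) \<in> M \<rightarrow>\<^sub>M count_space UNIV"
    by simp
  have radius: "0 < fps_conv_radius (pgf_fps M X)" if "X \<in> M \<rightarrow>\<^sub>M count_space UNIV" for X
    using fps_conv_radius_pgf_fps[OF that] by (rule less_le_trans[rotated]) simp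
  show "0 < fps_conv_radius (pgf_fps M (\<lambda>\<omega>. \<Sum>i\<in>I. \<xi> i \<omega>))"
    by (rule radius[OF sum_rv])
  have expansion:
    "(\<lambda>z. \<Prod>i\<in>I. eval_fps (pgf_fps M (\<xi> i)) z) has_fps_expansion (\<Prod>i\<in>I. pgf_fps M (\<xi> i))"
    using rv radius by (intro has_fps_expansion_prod eval_fps_has_fps_expansion) auto
  then show "0 < fps_conv_radius (\<Prod>i\<in>I. pgf_fps M (\<xi> i))"
    by (simp add: has_fps_expansion_def)
  have eval_prod: "eventually (\<lambda>z. eval_fps (\<Prod>i\<in>I. pgf_fps M (\<xi> i)) z
      = (\<Prod>i\<in>I. eval_fps (pgf_fps M (\<xi> i)) z)) (at 0)"
    using expansion unfolding has_fps_expansion_def eventually_at_filter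
    by (auto elim: eventually_mono)
  have "eventually (\<lambda>z::real. \<bar>z\<bar> < 1) (at 0)"
    by (auto simp: eventually_at intro!: exI[of _ 1])
  with eval_prod show "eventually (\<lambda>z. eval_fps (pgf_fps M (\<lambda>\<omega>. \<Sum>i\<in>I. \<xi> i \<omega>)) z
      = eval_fps (\<Prod>i\<in>I. pgf_fps M (\<xi> i)) z) (at 0)"
    by eventually_elim
      (simp add: pgf_eq_eval_fps[symmetric] rv sum_rv pgf_sum_indep[OF assms])
qed

lemma fps_deriv_pgf_fps:
  assumes X: "X \<in> M \<rightarrow>\<^sub>M count_space UNIV" and c: "summable (\<lambda>j. \<bar>c j\<bar>)"
    and log_deriv: "\<And>w. \<bar>w\<bar> < 1 \<Longrightarrow> deriv (pgf M X) w / pgf M X w = (\<Sum>j. c j * w ^ j)"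
  shows "fps_deriv (pgf_fps M X) = Abs_fps c * pgf_fps M X"
proof (rule fps_deriv_eq_mult_if_log_deriv)
  show "pgf_fps M X \<noteq> 0"
    by (rule pgf_fps_nonzero[OF X])
  show "0 < fps_conv_radius (pgf_fps M X)"
    using fps_conv_radius_pgf_fps[OF X] by (rule less_le_trans[rotated]) simp
  show "0 < fps_conv_radius (Abs_fps c)"
    using one_le_fps_conv_radius_if_abs_summable[OF c] by (rule less_le_trans[rotated]) simp
  have "deriv (eval_fps (pgf_fps M X)) z / eval_fps (pgf_fps M X) z = eval_fps (Abs_fps c) z"
    if z: "\<bar>z\<bar> < 1" for z
  proof -
    have "eventually (\<lambda>w. \<bar>w\<bar> < 1) (nhds z)"
      using z eventually_nhds_in_open[of "ball 0 1" z] by (simp add: dist_real_def)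
    then have "eventually (\<lambda>w. eval_fps (pgf_fps M X) w = pgf M X w) (nhds z)"
      by eventually_elim (simp add: pgf_eq_eval_fps[OF X])
    then have "deriv (eval_fps (pgf_fps M X)) z = deriv (pgf M X) z"
      by (rule deriv_cong_ev) simp
    moreover have "eval_fps (Abs_fps c) z = (\<Sum>j. c j * z ^ j)"
      by (simp add: eval_fps_def)
    ultimately show ?thesis
      using log_deriv[OF z] pgf_eq_eval_fps[OF X, of z] z by simp
  qed
  moreover have "eventually (\<lambda>z::real. \<bar>z\<bar> < 1) (at 0)"
    by (auto simp: eventually_at intro!: exI[of _ 1])
  ultimately show "eventually (\<lambda>z. deriv (eval_fps (pgf_fps M X)) z / eval_fps (pgf_fps M X) z
      = eval_fps (Abs_fps c) z) (at 0)"
    by (auto elim: eventually_mono)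
qed

lemma fps_deriv_pgf_fps_sum_indep:
  assumes "finite I" and indep: "indep_vars (\<lambda>_. count_space UNIV) \<xi> I"
    and c: "\<And>i. i \<in> I \<Longrightarrow> summable (\<lambda>k. \<bar>c i k\<bar>)"
    and log_deriv: "\<And>i w. i \<in> I \<Longrightarrow> \<bar>w\<bar> < 1 \<Longrightarrow>
      deriv (pgf M (\<xi> i)) w / pgf M (\<xi> i) w = (\<Sum>k. c i k * w ^ k)"
  shows "fps_deriv (pgf_fps M (\<lambda>\<omega>. \<Sum>i\<in>I. \<xi> i \<omega>))
    = Abs_fps (\<lambda>k. \<Sum>i\<in>I. c i k) * pgf_fps M (\<lambda>\<omega>. \<Sum>i\<in>I. \<xi> i \<omega>)"
proof -
  have "fps_deriv (pgf_fps M (\<xi> i)) = Abs_fps (c i) * pgf_fps M (\<xi> i)" if "i \<in> I" for i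
    using that indep by (intro fps_deriv_pgf_fps c log_deriv) (auto simp: indep_vars_def)
  then have "fps_deriv (\<Prod>i\<in>I. pgf_fps M (\<xi> i)) = (\<Sum>i\<in>I. Abs_fps (c i)) * (\<Prod>i\<in>I. pgf_fps M (\<xi> i))"
    by (rule fps_deriv_prod)
  moreover have "(\<Sum>i\<in>I. Abs_fps (c i)) = Abs_fps (\<lambda>k. \<Sum>i\<in>I. c i k)"
    by (simp add: fps_eq_iff fps_sum_nth)
  ultimately show ?thesis
    by (simp add: pgf_fps_sum_indep[OF assms(1,2)])
qed

lemma size_bias_recurrence_pgf_fps:
  assumes X: "X \<in> M \<rightarrow>\<^sub>M count_space UNIV" and c: "summable (\<lambda>k. \<bar>c k\<bar>)"
    and deriv_eq: "fps_deriv (pgf_fps M X) = Abs_fps c * pgf_fps M X"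
  shows "size_bias_recurrence (\<lambda>k. prob {\<omega> \<in> space M. X \<omega> = k}) c"
proof
  show "real (Suc N) * prob {\<omega> \<in> space M. X \<omega> = Suc N}
      = (\<Sum>m\<le>N. prob {\<omega> \<in> space M. X \<omega> = m} * c (N - m))" for N
    using fps_nth_Suc_if_fps_deriv_eq_mult[OF deriv_eq, of N] by (simp add: pgf_fps_def)
qed (use c sums_summable[OF sums_prob_nat_valued[OF X]] in simp_all)

end

section \<open>The Stein operator\<close>

lemma stein_op_eq_shifted_sum:
  assumes g: "\<And>i. i \<in> {1..n} \<Longrightarrow> summable (\<lambda>k. \<bar>g i (k + 1)\<bar>)" and h: "\<And>j. \<bar>h j\<bar> \<le> B"
  shows "stein_op (\<Sum>i=1..n. \<Sum>k. g i (k + 1)) n g h j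
    = (\<Sum>k. (\<Sum>i=1..n. g i (k + 1)) * h (j + k + 1)) - real j * h j"
proof -
  have telescope: "(\<Sum>l=1..k. fdiff h (j + l)) = h (j + k + 1) - h (j + 1)" for k
    by (induction k) (simp_all add: fdiff_def)
  have summable_shifted: "summable (\<lambda>k. g i (k + 1) * h (j + k + 1))"
    and summable_coeff: "summable (\<lambda>k. g i (k + 1))" if "i \<in> {1..n}" for i
    using summable_mult_bounded[OF g[OF that] h] g[OF that] by (auto intro: summable_rabs_cancel)
  have "(\<Sum>i=1..n. \<Sum>k. \<Sum>l=1..k. g i (k + 1) * fdiff h (j + l))
      = (\<Sum>i=1..n. \<Sum>k. g i (k + 1) * h (j + k + 1) - g i (k + 1) * h (j + 1))"
    using telescope by (simp add: right_diff_distrib flip: sum_distrib_left)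
  also have "\<dots> = (\<Sum>i=1..n. (\<Sum>k. g i (k + 1) * h (j + k + 1)) - (\<Sum>k. g i (k + 1)) * h (j + 1))"
    using summable_shifted summable_coeff
    by (intro sum.cong refl) (simp add: suminf_diff suminf_mult2 summable_mult2)
  also have "\<dots> = (\<Sum>i=1..n. \<Sum>k. g i (k + 1) * h (j + k + 1))
      - (\<Sum>i=1..n. \<Sum>k. g i (k + 1)) * h (j + 1)"
    by (simp add: sum_subtractf sum_distrib_right)
  also have "(\<Sum>i=1..n. \<Sum>k. g i (k + 1) * h (j + k + 1))
      = (\<Sum>k. (\<Sum>i=1..n. g i (k + 1)) * h (j + k + 1))"
    unfolding sum_distrib_right by (rule suminf_sum[symmetric, OF summable_shifted])
  finally show ?thesis
    by (simp add: stein_op_def)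
qed

theorem proposition3p1:
  fixes M :: "'a measure" and n :: nat
    and \<xi> :: "nat \<Rightarrow> 'a \<Rightarrow> nat" and g :: "nat \<Rightarrow> nat \<Rightarrow> real"
    and W :: "'a \<Rightarrow> nat" and \<mu> :: real
  assumes "prob_space M"
    and indep: "prob_space.indep_vars M (\<lambda>_. count_space UNIV) \<xi> {1..n}"
    and abs_conv: "\<And>i. i \<in> {1..n} \<Longrightarrow> summable (\<lambda>j. \<bar>g i (j + 1)\<bar>)"
    and pgf_ratio: "\<And>i w. i \<in> {1..n} \<Longrightarrow> \<bar>w\<bar> < 1 \<Longrightarrow>
        deriv (pgf M (\<xi> i)) w / pgf M (\<xi> i) w = (\<Sum>j. g i (j + 1) * w ^ j)"
    and W_def: "\<And>\<omega>. W \<omega> = (\<Sum>i=1..n. \<xi> i \<omega>)"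
    and mu_def: "\<mu> = (\<Sum>i=1..n. \<Sum>j. g i (j + 1))"
    and h: "h \<in> H_class M W"
  shows "(\<integral>\<omega>. stein_op \<mu> n g h (W \<omega>) \<partial>M) = 0"
proof -
  interpret prob_space M by fact
  obtain B where h_bound: "\<And>j. \<bar>h j\<bar> \<le> B"
    using h by (auto simp: H_class_def bounded_iff)
  define c where "c = (\<lambda>k. \<Sum>i=1..n. g i (k + 1))"
  have W_eq: "W = (\<lambda>\<omega>. \<Sum>i=1..n. \<xi> i \<omega>)"
    using W_def by blast
  have W_rv: "W \<in> M \<rightarrow>\<^sub>M count_space UNIV"
    unfolding W_eq using indep by (intro measurable_sum_nat) (auto simp: indep_vars_def)
  have "fps_deriv (pgf_fps M W) = Abs_fps c * pgf_fps M W"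
    unfolding W_eq c_def using abs_conv pgf_ratio
    by (intro fps_deriv_pgf_fps_sum_indep[OF finite_atLeastAtMost indep])
  moreover have "summable (\<lambda>k. \<bar>c k\<bar>)"
    unfolding c_def using abs_conv by (rule summable_abs_sum)
  ultimately interpret size_bias_recurrence "\<lambda>k. prob {\<omega> \<in> space M. W \<omega> = k}" c
    by (intro size_bias_recurrence_pgf_fps W_rv)
  have stein_op_eq: "stein_op \<mu> n g h j = (\<Sum>k. c k * h (j + k + 1)) - real j * h j" for j
    unfolding mu_def c_def by (rule stein_op_eq_shifted_sum[OF abs_conv h_bound])
  have "(\<integral>\<omega>. stein_op \<mu> n g h (W \<omega>) \<partial>M)
      = (\<Sum>m. stein_op \<mu> n g h m * prob {\<omega> \<in> space M. W \<omega> = m})"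
    by (rule integral_nat_valued_comp[OF W_rv]) (unfold stein_op_eq, rule summable_stein_identity[OF h_bound])
  also have "\<dots> = 0"
    unfolding stein_op_eq by (rule suminf_stein_identity[OF h_bound])
  finally show ?thesis .
qed

end
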